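(* Let $S_g$ be a closed orientable surface and let $u,v$ be adjacent vertices of the finitary curve graph $\mathcal{C}^\dagger_{<\infty}(S_g)$, i.e. distinct essential simple closed curves with $u\cap v$ finite. Then $|u\cap v|\leq 1$ if and only if there is no essential simple closed curve contained in $u\cup v$ other than $u$ and $v$.
   Context: The finitary curve graph $\mathcal{C}^\dagger_{<\infty}(S)$ has as vertices the embedded simple closed essential curves in $S$ (actual curves, not isotopy classes), with distinct $u,v$ adjacent if and only if $u\cap v$ is finite. *)

theory Defs
  imports "HOL-Analysis.Analysis" "HOL-Homology.Homology"
begin

definition surface_2manifold :: "'a topology \<Rightarrow> bool" where
  "surface_2manifold X \<longleftrightarrow> Hausdorff_space X \<and>
     (\<forall>x \<in> topspace X. \<exists>U. openin X U \<and> x \<in> U \<and>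
        (subtopology X U) homeomorphic_space (euclidean :: (real^2) topology))"

text \<open>A closed orientable surface: compact connected 2-manifold without boundary
  whose top integral singular homology group is nontrivial (i.e. isomorphic to Z),
  which is the standard homological characterisation of orientability.\<close>
definition closed_orientable_surface :: "'a topology \<Rightarrow> bool" where
  "closed_orientable_surface X \<longleftrightarrow> surface_2manifold X \<and> compact_space X \<and>
     connected_space X \<and> \<not> trivial_group (homology_group 2 X)"

definition circle_top :: "(real^2) topology" where
  "circle_top = subtopology euclidean (sphere 0 1)"

text \<open>An embedded simple closed curve (an actual subset, not an isotopy class)
  which is essential, i.e. a parametrising embedding of the circle is not
  homotopic to a constant map.\<close>
definition essential_scc :: "'a topology \<Rightarrow> 'a set \<Rightarrow> bool" where
  "essential_scc X c \<longleftrightarrow>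
     (\<exists>f. embedding_map circle_top X f \<and> f ` (sphere 0 1) = c \<and>
          \<not> (\<exists>a. homotopic_with (\<lambda>_. True) circle_top X f (\<lambda>_. a)))"

end

(*
  If u and v meet in at most one point, a simple closed curve c in u \<union> v lying in neither of
  them becomes, after removing the at most one point of u \<inter> v from it, a connected set split by
  the closed sets u and v; and a circle contained in a circle is the whole circle (invariance of
  domain).

  If u and v meet in at least two points, an arc \<beta> of v between two consecutive intersection
  points meets u only in its endpoints, so u \<union> \<beta> is a theta graph. Its two circles through \<beta>
  lie in u \<union> v and are neither u (they contain the interior of \<beta>) nor v (they contain
  infinitely many points of u). One of them is essential: modelling u \<union> \<beta> as the unit circle
  with a chord, null-homotopies of both circles would extend over the two half discs, and these
  extensions glue to an extension of u over the whole disc.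
*)
theory Submission
  imports Defs
begin

section \<open>Embedded circles and null-homotopy\<close>

definition embedded_circle :: "'a topology \<Rightarrow> 'a set \<Rightarrow> bool" where
  "embedded_circle X c \<longleftrightarrow> (\<exists>f. embedding_map circle_top X f \<and> f ` sphere 0 1 = c)"

abbreviation nullhomotopic_circle :: "'a topology \<Rightarrow> (real^2 \<Rightarrow> 'a) \<Rightarrow> bool" where
  "nullhomotopic_circle X f \<equiv> \<exists>a. homotopic_with (\<lambda>_. True) circle_top X f (\<lambda>_. a)"

lemma topspace_circle_top [simp]: "topspace circle_top = sphere 0 1"
  by (simp add: circle_top_def)

lemma compact_space_circle_top: "compact_space circle_top"
  unfolding circle_top_def
  by (rule compact_space_subtopology) (simp add: compactin_subtopology compact_sphere)

lemma prod_topology_top_of_set: "prod_topology (top_of_set A) (top_of_set B) = top_of_set (A \<times> B)"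
  by (simp add: subtopology_Times euclidean_product_topology)

lemma embedding_map_imp_continuous_inj:
  "embedding_map X Y f \<Longrightarrow> continuous_map X Y f \<and> inj_on f (topspace X)"
  unfolding embedding_map_def
  by (auto dest: homeomorphic_imp_continuous_map homeomorphic_imp_injective_map
      simp: continuous_map_in_subtopology)

lemma embedding_map_circle_iff:
  assumes "Hausdorff_space X"
  shows "embedding_map circle_top X f \<longleftrightarrow> continuous_map circle_top X f \<and> inj_on f (sphere 0 1)"
  using assms continuous_imp_embedding_map[OF _ compact_space_circle_top]
    embedding_map_imp_continuous_inj[of circle_top X f]
  by auto

lemma closedin_circle_image:
  assumes "Hausdorff_space X" "continuous_map circle_top X f"
  shows "closedin X (f ` sphere 0 1)"
  using assms compact_space_circle_top compactin_imp_closedin image_compactin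
  by (metis compact_space_def topspace_circle_top)

lemma nullhomotopic_circle_extends_to_disc:
  assumes "homotopic_with (\<lambda>_. True) circle_top X f (\<lambda>_. a)"
  obtains E where "continuous_map (top_of_set (cball 0 1)) X E" "\<forall>x\<in>sphere 0 1. E x = f x"
proof -
  obtain h where h: "continuous_map (prod_topology (top_of_set {0..1::real}) circle_top) X h"
    and h0: "\<And>x. h (0, x) = f x" and h1: "\<And>x. h (1, x) = a"
    using assms unfolding homotopic_with_def by blast
  have "(1::real, axis 1 1 :: real^2) \<in> topspace (prod_topology (top_of_set {0..1::real}) circle_top)"
    by (simp add: norm_axis_1)
  then have a: "a \<in> topspace X"
    using continuous_map_image_subset_topspace[OF h] h1 by (metis image_subset_iff)
  \<comment> \<open>The circle of radius \<open>1 - t/2\<close> follows the homotopy at time \<open>t\<close>; the disc of radius \<open>1/2\<close>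
      is sent to \<open>a\<close>.\<close>
  define \<rho> where "\<rho> = (\<lambda>x::real^2. (2 - 2 * norm x, x /\<^sub>R norm x))"
  define E where "E x = (if norm x \<le> 1/2 then a else h (\<rho> x))" for x :: "real^2"
  have \<rho>: "continuous_map (top_of_set {x. x \<in> cball 0 1 \<and> 1/2 \<le> norm x})
             (prod_topology (top_of_set {0..1::real}) circle_top) \<rho>"
    unfolding circle_top_def \<rho>_def prod_topology_top_of_set continuous_map_subtopology_eu
  proof
    show "continuous_on {x::real^2. x \<in> cball 0 1 \<and> 1/2 \<le> norm x} (\<lambda>x. (2 - 2 * norm x, x /\<^sub>R norm x))"
      by (intro continuous_intros) auto
  qed (auto, subst left_inverse, auto)
  have "continuous_map (top_of_set (cball (0::real^2) 1)) X E"
    unfolding E_def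
  proof (rule continuous_map_cases_le)
    show "continuous_map (subtopology (top_of_set (cball 0 1))
        {x \<in> topspace (top_of_set (cball 0 1)). 1/2 \<le> norm x}) X (\<lambda>x. h (\<rho> x))"
      using continuous_map_compose[OF \<rho> h] by (simp add: subtopology_subtopology Int_def o_def)
    show "a = h (\<rho> x)" if "norm x = 1/2" for x
    proof -
      have "2 - 2 * norm x = 1" using that by simp
      then show ?thesis by (simp only: \<rho>_def h1)
    qed
  qed (use a in \<open>auto simp: continuous_on_norm_id\<close>)
  moreover have "\<forall>x\<in>sphere 0 1. E x = f x"
    by (auto simp: E_def \<rho>_def h0)
  ultimately show ?thesis
    using that by blast
qed

lemma disc_extension_imp_nullhomotopic_circle:
  assumes E: "continuous_map (top_of_set (cball 0 1)) X E" and Ef: "\<forall>x\<in>sphere 0 1. E x = f x"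
  shows "nullhomotopic_circle X f"
proof -
  define H where "H = (\<lambda>(t::real, x::real^2). E ((1 - t) *\<^sub>R x))"
  have "continuous_map (prod_topology (top_of_set {0..1}) circle_top) (top_of_set (cball 0 1))
          (\<lambda>(t::real, x::real^2). (1 - t) *\<^sub>R x)"
    unfolding circle_top_def prod_topology_top_of_set continuous_map_subtopology_eu
  proof
    show "continuous_on ({0..1} \<times> sphere 0 1) (\<lambda>(t::real, x::real^2). (1 - t) *\<^sub>R x)"
      by (auto intro!: continuous_intros simp: case_prod_unfold)
  qed (auto simp: abs_if)
  then have "continuous_map (prod_topology (top_of_set {0..1}) circle_top) X H"
    using continuous_map_compose[OF _ E] by (simp add: H_def o_def case_prod_unfold)
  then have "homotopic_with (\<lambda>_. True) circle_top X E (\<lambda>_. E 0)"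
    unfolding homotopic_with_def by (intro exI[of _ H]) (auto simp: H_def)
  then have "homotopic_with (\<lambda>_. True) circle_top X f (\<lambda>_. E 0)"
    by (rule homotopic_with_eq) (use Ef in auto)
  then show ?thesis by blast
qed

lemma nullhomotopic_circle_iff_extends_to_disc:
  "nullhomotopic_circle X f \<longleftrightarrow>
     (\<exists>E. continuous_map (top_of_set (cball 0 1)) X E \<and> (\<forall>x\<in>sphere 0 1. E x = f x))"
  using nullhomotopic_circle_extends_to_disc disc_extension_imp_nullhomotopic_circle by metis

section \<open>Two circles meeting in at most one point\<close>

lemma essential_scc_imp_embedded_circle: "essential_scc X c \<Longrightarrow> embedded_circle X c"
  unfolding essential_scc_def embedded_circle_def by blast

lemma closedin_embedded_circle: "Hausdorff_space X \<Longrightarrow> embedded_circle X c \<Longrightarrow> closedin X c"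
  unfolding embedded_circle_def
  using closedin_circle_image embedding_map_imp_continuous_inj by blast

lemma continuous_injective_circle_self_map_surj:
  fixes k :: "real^2 \<Rightarrow> real^2"
  assumes "continuous_on (sphere 0 1) k" "inj_on k (sphere 0 1)" "k ` sphere 0 1 \<subseteq> sphere 0 1"
  shows "k ` sphere 0 1 = sphere 0 1"
proof (rule ccontr)
  \<comment> \<open>Otherwise \<open>k\<close> embeds the circle into a punctured circle, i.e. into the real line.\<close>
  assume "k ` sphere 0 1 \<noteq> sphere 0 1"
  then obtain p where p: "p \<in> sphere (0::real^2) 1" "p \<notin> k ` sphere 0 1"
    using assms(3) by blast
  have "(sphere (0::real^2) 1 - {p}) homeomorphic (UNIV :: real set)"
    by (rule homeomorphic_punctured_sphere_affine) (use p in auto)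
  then obtain h :: "real^2 \<Rightarrow> real" and h' where h: "homeomorphism (sphere 0 1 - {p}) UNIV h h'"
    unfolding homeomorphic_def by blast
  have sub: "k ` sphere 0 1 \<subseteq> sphere 0 1 - {p}"
    using assms(3) p by blast
  have "continuous_on (sphere 0 1) (h \<circ> k)"
    using continuous_on_compose[OF assms(1)] continuous_on_subset[OF homeomorphism_cont1[OF h] sub]
    by blast
  moreover have "inj_on (h \<circ> k) (sphere 0 1)"
  proof (rule comp_inj_on[OF assms(2)])
    have "inj_on h (sphere 0 1 - {p})"
      by (rule inj_on_inverseI[where g=h']) (use homeomorphism_apply1[OF h] in blast)
    then show "inj_on h (k ` sphere 0 1)"
      using sub inj_on_subset by blast
  qed
  ultimately have "DIM(real^2) \<le> DIM(real)"
    by (intro no_embedding_sphere_lowdim[of 0 1]) auto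
  then show False by simp
qed

lemma embedded_circle_subset_imp_eq:
  assumes "embedded_circle X c" "embedded_circle X u" "c \<subseteq> u"
  shows "c = u"
proof -
  obtain e where e: "embedding_map circle_top X e" "e ` sphere 0 1 = c"
    using assms(1) unfolding embedded_circle_def by blast
  obtain f where f: "embedding_map circle_top X f" "f ` sphere 0 1 = u"
    using assms(2) unfolding embedded_circle_def by blast
  obtain g where "homeomorphic_maps circle_top (subtopology X u) f g"
    using f unfolding embedding_map_def homeomorphic_map_maps by auto
  then have g: "continuous_map (subtopology X u) circle_top g"
    and fg: "\<And>y. y \<in> u \<Longrightarrow> f (g y) = y"
    using f(2) continuous_map_image_subset_topspace[of circle_top X f]
      embedding_map_imp_continuous_inj[OF f(1)]
    by (auto simp: homeomorphic_maps_def)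
  have "continuous_map circle_top (subtopology X u) e"
    using embedding_map_imp_continuous_inj[OF e(1)] e(2) assms(3)
    by (auto simp: continuous_map_in_subtopology)
  then have "continuous_map circle_top circle_top (g \<circ> e)"
    using g continuous_map_compose by blast
  moreover have "inj_on (g \<circ> e) (sphere 0 1)"
  proof (rule inj_onI)
    fix x y assume xy: "x \<in> sphere 0 1" "y \<in> sphere 0 1" "(g \<circ> e) x = (g \<circ> e) y"
    then have "e x = e y"
      using fg e(2) assms(3) by (metis comp_apply image_subset_iff)
    then show "x = y"
      using xy embedding_map_imp_continuous_inj[OF e(1)] by (auto simp: inj_on_def)
  qed
  ultimately have "(g \<circ> e) ` sphere 0 1 = sphere 0 1"
    by (intro continuous_injective_circle_self_map_surj) (auto simp: circle_top_def)
  then have "u = f ` g ` c"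
    using f(2) e(2) by (metis image_comp)
  also have "\<dots> = c"
    unfolding image_image using fg assms(3) by (simp add: subset_iff)
  finally show ?thesis by simp
qed

lemma connected_circle_minus_le_1:
  assumes "finite F" "card F \<le> 1"
  shows "connected (sphere (0::real^2) 1 - F)"
proof -
  consider "F = {}" | p where "F = {p}"
    using assms by (metis card_0_eq card_1_singletonE le_eq_less_or_eq less_one)
  then show ?thesis
  proof cases
    case (2 p)
    show ?thesis
    proof (cases "p \<in> sphere 0 1")
      case True
      have "(sphere (0::real^2) 1 - {p}) homeomorphic (UNIV :: real set)"
        by (rule homeomorphic_punctured_sphere_affine) (use True in auto)
      then show ?thesis
        using 2 homeomorphic_connectedness connected_UNIV by blast
    qed (use 2 in \<open>simp add: connected_sphere\<close>)
  qed (simp add: connected_sphere)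
qed

lemma embedded_circle_in_union_card_le_1:
  assumes X: "Hausdorff_space X"
    and c: "embedded_circle X c" and u: "embedded_circle X u" and v: "embedded_circle X v"
    and "finite (u \<inter> v)" "card (u \<inter> v) \<le> 1" "c \<subseteq> u \<union> v"
  shows "c = u \<or> c = v"
proof (rule ccontr)
  \<comment> \<open>Otherwise \<open>c\<close> minus at most one point would be split by the closed sets \<open>u\<close> and \<open>v\<close>.\<close>
  assume "\<not> (c = u \<or> c = v)"
  then have "\<not> c \<subseteq> u" "\<not> c \<subseteq> v"
    using embedded_circle_subset_imp_eq c u v by blast+
  obtain e where e: "embedding_map circle_top X e" "e ` sphere 0 1 = c"
    using c unfolding embedded_circle_def by blast
  then have e': "continuous_map circle_top X e" "inj_on e (sphere 0 1)"
    using embedding_map_circle_iff[OF X] by auto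
  define F where "F = {s \<in> sphere 0 1. e s \<in> u \<inter> v}"
  have "inj_on e F" "e ` F \<subseteq> u \<inter> v"
    using e'(2) by (auto simp: F_def inj_on_def)
  then have "finite F" "card F \<le> 1"
    using assms(5,6) inj_on_finite card_inj_on_le le_trans by metis+
  then have "connectedin circle_top (sphere 0 1 - F)"
    using connected_circle_minus_le_1 by (simp add: circle_top_def connectedin_subtopology)
  then have "connectedin X (e ` (sphere 0 1 - F))"
    using connectedin_continuous_map_image[OF e'(1)] by blast
  moreover have "e ` (sphere 0 1 - F) \<subseteq> u \<union> v" "u \<inter> v \<inter> e ` (sphere 0 1 - F) = {}"
    using assms(7) e(2) by (auto simp: F_def)
  moreover have "u \<inter> e ` (sphere 0 1 - F) \<noteq> {}" "v \<inter> e ` (sphere 0 1 - F) \<noteq> {}"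
    using \<open>\<not> c \<subseteq> u\<close> \<open>\<not> c \<subseteq> v\<close> assms(7) e(2) by (auto simp: F_def)
  ultimately show False
    using closedin_embedded_circle[OF X u] closedin_embedded_circle[OF X v]
    unfolding connectedin_closedin by blast
qed

section \<open>Convex bodies and half discs\<close>

lemma frontier_convex_body_homeomorphism:
  fixes R :: "(real^2) set"
  assumes "compact R" "convex R" "interior R \<noteq> {}"
  obtains l' l where "homeomorphism (frontier R) (sphere (0::real^2) 1) l' l"
proof -
  have "aff_dim R = aff_dim (cball (0::real^2) 1)"
    using assms(3) by (simp add: aff_dim_nonempty_interior)
  then have "rel_frontier R homeomorphic rel_frontier (cball (0::real^2) 1)"
    using assms by (intro homeomorphic_rel_frontiers_convex_bounded_sets) (auto simp: compact_imp_bounded)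
  then have "frontier R homeomorphic sphere (0::real^2) 1"
    using assms(3) by (simp add: rel_frontier_nonempty_interior)
  then show ?thesis
    using that unfolding homeomorphic_def by blast
qed

lemma frontier_homeomorphism_extension:
  fixes R :: "'a::euclidean_space set" and l' :: "'a \<Rightarrow> 'b::euclidean_space"
  assumes "closed R" "homeomorphism (frontier R) (sphere 0 1) l' l"
    and E: "continuous_map (top_of_set (cball 0 1)) X E"
  obtains \<Psi> where "continuous_map (top_of_set R) X \<Psi>" "\<And>x. x \<in> frontier R \<Longrightarrow> \<Psi> x = E (l' x)"
proof -
  have "closedin (top_of_set R) (frontier R)"
    using assms(1) by (intro closed_subset) (simp_all add: frontier_subset_closed)
  moreover have "l' ` frontier R \<subseteq> cball 0 1"
    using homeomorphism_image1[OF assms(2)] by auto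
  moreover have "cball (0::'b) 1 \<noteq> {}"
    by simp
  ultimately obtain g where g: "continuous_on R g" "g ` R \<subseteq> cball 0 1"
    "\<And>x. x \<in> frontier R \<Longrightarrow> g x = l' x"
    using Dugundji[OF convex_cball _ _ homeomorphism_cont1[OF assms(2)]] by blast
  have "continuous_map (top_of_set R) (top_of_set (cball 0 1)) g"
    using g(1,2) by auto
  then have "continuous_map (top_of_set R) X (E \<circ> g)"
    using E continuous_map_compose by blast
  then show ?thesis
    using that g(3) by simp
qed

lemma convex_body_frontier_embedded_circle:
  fixes R :: "(real^2) set"
  assumes X: "Hausdorff_space X" and R: "compact R" "convex R" "interior R \<noteq> {}"
    and \<Phi>: "continuous_map (top_of_set (frontier R)) X \<Phi>" "inj_on \<Phi> (frontier R)"
  obtains e where "embedding_map circle_top X e" "e ` sphere 0 1 = \<Phi> ` frontier R"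
    and "nullhomotopic_circle X e \<Longrightarrow>
           \<exists>\<Psi>. continuous_map (top_of_set R) X \<Psi> \<and> (\<forall>x\<in>frontier R. \<Psi> x = \<Phi> x)"
proof -
  obtain l' l where l: "homeomorphism (frontier R) (sphere (0::real^2) 1) l' l"
    using frontier_convex_body_homeomorphism[OF R] by blast
  have l_cont: "continuous_map circle_top (top_of_set (frontier R)) l"
    using homeomorphism_cont2[OF l] homeomorphism_image2[OF l] by (auto simp: circle_top_def)
  have l_inj: "inj_on l (sphere 0 1)"
    by (rule inj_on_inverseI[where g=l']) (use homeomorphism_apply2[OF l] in blast)
  define e where "e = \<Phi> \<circ> l"
  have "continuous_map circle_top X e"
    unfolding e_def using continuous_map_compose[OF l_cont \<Phi>(1)] .
  moreover have "inj_on e (sphere 0 1)"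
    unfolding e_def using homeomorphism_image2[OF l] \<Phi>(2) l_inj by (simp add: comp_inj_on)
  ultimately have "embedding_map circle_top X e"
    using embedding_map_circle_iff[OF X] by blast
  moreover have "e ` sphere 0 1 = \<Phi> ` frontier R"
    unfolding e_def image_comp[symmetric] homeomorphism_image2[OF l] ..
  moreover have "\<exists>\<Psi>. continuous_map (top_of_set R) X \<Psi> \<and> (\<forall>x\<in>frontier R. \<Psi> x = \<Phi> x)"
    if null: "nullhomotopic_circle X e"
  proof -
    obtain E where E: "continuous_map (top_of_set (cball (0::real^2) 1)) X E" "\<forall>x\<in>sphere 0 1. E x = e x"
      using null unfolding nullhomotopic_circle_iff_extends_to_disc by blast
    obtain \<Psi> where \<Psi>: "continuous_map (top_of_set R) X \<Psi>" "\<And>x. x \<in> frontier R \<Longrightarrow> \<Psi> x = E (l' x)"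
      using frontier_homeomorphism_extension[OF compact_imp_closed[OF R(1)] l E(1)] by blast
    have "\<Psi> x = \<Phi> x" if "x \<in> frontier R" for x
    proof -
      have "l' x \<in> sphere 0 1"
        using that homeomorphism_image1[OF l] by blast
      then show ?thesis
        using that \<Psi>(2) E(2) homeomorphism_apply1[OF l] by (simp add: e_def)
    qed
    with \<Psi>(1) show ?thesis by blast
  qed
  ultimately show ?thesis using that by blast
qed

definition half_disc :: "'a::euclidean_space \<Rightarrow> real \<Rightarrow> 'a set" where
  "half_disc n k = cball 0 1 \<inter> {x. k \<le> n \<bullet> x}"

lemma compact_half_disc: "compact (half_disc n k)"
  by (simp add: half_disc_def compact_Int_closed closed_halfspace_ge)

lemma convex_half_disc: "convex (half_disc n k)"
  by (simp add: half_disc_def convex_Int convex_halfspace_ge)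

lemma half_disc_neg: "half_disc (- n) (- k) = cball 0 1 \<inter> {x. n \<bullet> x \<le> k}"
  by (simp add: half_disc_def)

lemma interior_half_disc:
  fixes n :: "'a::euclidean_space"
  assumes "n \<noteq> 0"
  shows "interior (half_disc n k) = ball 0 1 \<inter> {x. k < n \<bullet> x}"
  using assms by (simp add: half_disc_def)

lemma interior_half_disc_nonempty:
  fixes n :: "'a::euclidean_space"
  assumes "\<bar>k\<bar> < norm n"
  shows "interior (half_disc n k) \<noteq> {}"
proof -
  \<comment> \<open>The point of the normal ray halfway between the cutting line and the unit circle.\<close>
  define x where "x = ((k + norm n) / (2 * norm n ^ 2)) *\<^sub>R n"
  have n: "norm n > 0" using assms by linarith
  have "norm x = (k + norm n) / (2 * norm n)"
    using n assms by (simp add: x_def power2_eq_square)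
  then have "norm x < 1"
    using n assms by (simp add: divide_less_eq)
  moreover have "n \<bullet> x = (k + norm n) / 2"
    using n by (simp add: x_def dot_square_norm power2_eq_square)
  ultimately have "x \<in> interior (half_disc n k)"
    using n assms by (simp add: interior_half_disc)
  then show ?thesis by blast
qed

lemma frontier_half_disc:
  fixes n :: "'a::euclidean_space"
  assumes "n \<noteq> 0"
  shows "frontier (half_disc n k) = (sphere 0 1 \<inter> {x. k \<le> n \<bullet> x}) \<union> (cball 0 1 \<inter> {x. n \<bullet> x = k})"
proof -
  have "frontier (half_disc n k) = half_disc n k - interior (half_disc n k)"
    using compact_half_disc[of n k] by (simp add: frontier_def compact_imp_closed)
  also have "\<dots> = (sphere 0 1 \<inter> {x. k \<le> n \<bullet> x}) \<union> (cball 0 1 \<inter> {x. n \<bullet> x = k})"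
    unfolding interior_half_disc[OF assms] by (auto simp: half_disc_def)
  finally show ?thesis .
qed

lemma infinite_sphere_inter_open_halfspace:
  fixes n :: "'a::euclidean_space"
  assumes "2 \<le> DIM('a)" "\<bar>k\<bar> < norm n"
  shows "infinite (sphere 0 1 \<inter> {x. k < n \<bullet> x})"
proof
  assume fin: "finite (sphere 0 1 \<inter> {x. k < n \<bullet> x})"
  have "openin (top_of_set (sphere 0 1)) (sphere 0 1 \<inter> {x. k < n \<bullet> x})"
    using open_halfspace_gt[of k n] by (simp add: openin_open_Int inf_commute)
  moreover have "closedin (top_of_set (sphere 0 1)) (sphere 0 1 \<inter> {x. k < n \<bullet> x})"
    using fin by (intro closed_subset) (simp_all add: finite_imp_closed)
  moreover have "connected (sphere (0::'a) 1)"
    using assms(1) by (simp add: connected_sphere)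
  ultimately have clopen: "sphere 0 1 \<inter> {x. k < n \<bullet> x} = {} \<or> sphere 0 1 \<inter> {x. k < n \<bullet> x} = sphere 0 1"
    unfolding connected_clopen by blast
  have "n \<noteq> 0"
    using assms(2) by auto
  then have "sgn n \<in> sphere 0 1" "n \<bullet> sgn n = norm n"
    by (simp_all add: norm_sgn sgn_div_norm dot_square_norm power2_eq_square)
  then have "sgn n \<in> sphere 0 1 \<inter> {x. k < n \<bullet> x}" "- sgn n \<in> sphere 0 1 - {x. k < n \<bullet> x}"
    using assms(2) by simp_all
  with clopen show False
    by blast
qed

lemma continuous_map_glue_half_discs:
  fixes n :: "'a::euclidean_space"
  assumes "continuous_map (top_of_set (half_disc n k)) X \<Psi>\<^sub>1"
    and "continuous_map (top_of_set (half_disc (- n) (- k))) X \<Psi>\<^sub>2"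
    and "\<And>x. x \<in> cball 0 1 \<Longrightarrow> n \<bullet> x = k \<Longrightarrow> \<Psi>\<^sub>1 x = \<Psi>\<^sub>2 x"
  shows "continuous_map (top_of_set (cball 0 1)) X (\<lambda>x. if n \<bullet> x \<le> k then \<Psi>\<^sub>2 x else \<Psi>\<^sub>1 x)"
proof (rule continuous_map_cases_le)
  show "continuous_map (top_of_set (cball 0 1)) euclideanreal (\<lambda>x. n \<bullet> x)"
    by (simp add: continuous_on_inner continuous_on_id)
  have "subtopology (top_of_set (cball 0 1)) {x \<in> topspace (top_of_set (cball 0 1)). n \<bullet> x \<le> k}
          = top_of_set (half_disc (- n) (- k))"
    by (simp add: subtopology_subtopology half_disc_neg) (rule arg_cong[where f=top_of_set], auto)
  then show "continuous_map (subtopology (top_of_set (cball 0 1))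
      {x \<in> topspace (top_of_set (cball 0 1)). n \<bullet> x \<le> k}) X \<Psi>\<^sub>2"
    using assms(2) by simp
  have "subtopology (top_of_set (cball 0 1)) {x \<in> topspace (top_of_set (cball 0 1)). k \<le> n \<bullet> x}
          = top_of_set (half_disc n k)"
    by (simp add: subtopology_subtopology half_disc_def) (rule arg_cong[where f=top_of_set], auto)
  then show "continuous_map (subtopology (top_of_set (cball 0 1))
      {x \<in> topspace (top_of_set (cball 0 1)). k \<le> n \<bullet> x}) X \<Psi>\<^sub>1"
    using assms(1) by simp
qed (use assms(3) in auto)

section \<open>The theta graph\<close>

definition perp :: "real^2 \<Rightarrow> real^2" where
  "perp d = vector [- (d$2), d$1]"

lemma inner_perp_self: "perp d \<bullet> d = 0"
  by (simp add: perp_def inner_vec_def sum_2)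

lemma perp_eq_0_iff: "perp d = 0 \<longleftrightarrow> d = 0"
  by (auto simp: perp_def vec_eq_iff forall_2)

lemma perp_orthogonal_imp_parallel:
  assumes "perp d \<bullet> y = 0"
  shows "(d \<bullet> d) *\<^sub>R y = (y \<bullet> d) *\<^sub>R d"
proof -
  have "d$1 * y$2 = d$2 * y$1"
    using assms by (simp add: perp_def inner_vec_def sum_2 algebra_simps)
  then show ?thesis
    unfolding vec_eq_iff forall_2
    by (simp add: inner_vec_def sum_2 algebra_simps)
qed

lemma power2_norm_linepath_sphere:
  fixes a b :: "'a::real_inner"
  assumes "a \<in> sphere 0 1" "b \<in> sphere 0 1"
  shows "(norm (linepath a b s))\<^sup>2 = 1 + s * (s - 1) * (norm (b - a))\<^sup>2"
proof -
  have "linepath a b s = a + s *\<^sub>R (b - a)"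
    by (simp add: linepath_def algebra_simps)
  moreover have "a \<bullet> a = 1" "b \<bullet> b = 1"
    using assms by (simp_all add: dot_square_norm)
  ultimately show ?thesis
    by (simp only: power2_norm_eq_inner)
      (simp add: inner_add_left inner_add_right inner_diff_left inner_diff_right
        inner_commute[of b a] algebra_simps)
qed

locale circle_chord =
  fixes r1 r2 :: "real^2"
  assumes r1: "r1 \<in> sphere 0 1" and r2: "r2 \<in> sphere 0 1" and distinct: "r1 \<noteq> r2"
begin

definition normal :: "real^2" where
  "normal = perp (r2 - r1)"

definition level :: real where
  "level = normal \<bullet> r1"

definition chord :: "(real^2) set" where
  "chord = cball 0 1 \<inter> {x. normal \<bullet> x = level}"

definition chord_param :: "real^2 \<Rightarrow> real" where
  "chord_param x = ((x - r1) \<bullet> (r2 - r1)) / ((r2 - r1) \<bullet> (r2 - r1))"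

lemma normal_nonzero: "normal \<noteq> 0"
  using distinct by (simp add: normal_def perp_eq_0_iff)

lemma linepath_eq: "linepath r1 r2 s = r1 + s *\<^sub>R (r2 - r1)"
  by (simp add: linepath_def algebra_simps)

lemma chord_param_linepath [simp]: "chord_param (linepath r1 r2 s) = s"
  using distinct by (simp add: chord_param_def linepath_eq)

lemma inner_normal_linepath: "normal \<bullet> linepath r1 r2 s = level"
  using inner_perp_self[of "r2 - r1"]
  by (simp add: linepath_eq level_def normal_def inner_add_right)

lemma linepath_in_sphere_iff: "linepath r1 r2 s \<in> sphere 0 1 \<longleftrightarrow> s = 0 \<or> s = 1"
proof
  assume "linepath r1 r2 s \<in> sphere 0 1"
  then have "s * (s - 1) * (norm (r2 - r1))\<^sup>2 = 0"
    using power2_norm_linepath_sphere[OF r1 r2, of s] by simp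
  then show "s = 0 \<or> s = 1"
    using distinct by simp
qed (use r1 r2 in \<open>auto simp: linepath_0' linepath_1'\<close>)

lemma chord_eq: "chord = linepath r1 r2 ` {0..1}"
proof
  show "linepath r1 r2 ` {0..1} \<subseteq> chord"
  proof clarify
    fix s :: real assume "s \<in> {0..1}"
    then have "s * (s - 1) \<le> 0"
      by (simp add: mult_nonneg_nonpos)
    then have "s * (s - 1) * (norm (r2 - r1))\<^sup>2 \<le> 0"
      by (simp add: mult_nonpos_nonneg)
    then have "(norm (linepath r1 r2 s))\<^sup>2 \<le> 1"
      using power2_norm_linepath_sphere[OF r1 r2, of s] by simp
    then show "linepath r1 r2 s \<in> chord"
      by (simp add: chord_def inner_normal_linepath power_le_one_iff)
  qed
  show "chord \<subseteq> linepath r1 r2 ` {0..1}"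
  proof
    fix x assume x: "x \<in> chord"
    then have "perp (r2 - r1) \<bullet> (x - r1) = 0"
      by (simp add: chord_def level_def normal_def inner_diff_right)
    then have par: "((r2 - r1) \<bullet> (r2 - r1)) *\<^sub>R (x - r1) = ((x - r1) \<bullet> (r2 - r1)) *\<^sub>R (r2 - r1)"
      by (rule perp_orthogonal_imp_parallel)
    have "x - r1 = inverse ((r2 - r1) \<bullet> (r2 - r1)) *\<^sub>R (((r2 - r1) \<bullet> (r2 - r1)) *\<^sub>R (x - r1))"
      using distinct by simp
    also have "\<dots> = chord_param x *\<^sub>R (r2 - r1)"
      unfolding par by (simp add: chord_param_def divide_inverse mult.commute)
    finally have x_eq: "x = linepath r1 r2 (chord_param x)"
      by (simp add: linepath_eq algebra_simps)
    have "(norm x)\<^sup>2 \<le> 1"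
      using x by (simp add: chord_def abs_square_le_1)
    then have "chord_param x * (chord_param x - 1) \<le> 0"
      using power2_norm_linepath_sphere[OF r1 r2, of "chord_param x"] x_eq distinct
      by (simp add: mult_le_0_iff)
    then have "chord_param x \<in> {0..1}"
      by (auto simp: mult_le_0_iff)
    with x_eq show "x \<in> linepath r1 r2 ` {0..1}"
      by blast
  qed
qed

lemma abs_level_less: "\<bar>level\<bar> < norm normal"
proof -
  \<comment> \<open>The midpoint of the chord lies on the line \<open>normal \<bullet> x = level\<close> inside the open disc.\<close>
  have "(norm (linepath r1 r2 (1/2)))\<^sup>2 < 1"
    using power2_norm_linepath_sphere[OF r1 r2, of "1/2"] distinct by simp
  then have "norm (linepath r1 r2 (1/2)) < 1"
    by (simp add: power_less_one_iff)
  have "\<bar>level\<bar> \<le> norm normal * norm (linepath r1 r2 (1/2))"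
    using Cauchy_Schwarz_ineq2[of normal "linepath r1 r2 (1/2)"] by (simp add: inner_normal_linepath)
  also have "\<dots> < norm normal"
    using \<open>norm (linepath r1 r2 (1/2)) < 1\<close> normal_nonzero by simp
  finally show ?thesis .
qed

end

lemma continuous_map_closedin_cases:
  assumes "closedin X A" "closedin X B" "topspace X \<subseteq> A \<union> B"
    and "continuous_map (subtopology X A) Y f" "continuous_map (subtopology X B) Y g"
    and "\<And>x. x \<in> topspace X \<Longrightarrow> x \<in> A \<Longrightarrow> x \<in> B \<Longrightarrow> f x = g x"
  shows "continuous_map X Y (\<lambda>x. if x \<in> A then f x else g x)"
proof (rule pasting_lemma_closed[where I="{True, False}" and T="\<lambda>b. if b then A else B"
      and f="\<lambda>b. if b then f else g"])
  show "\<exists>j. j \<in> {True, False} \<and> x \<in> (if j then A else B) \<and>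
          (if x \<in> A then f x else g x) = (if j then f else g) x" if "x \<in> topspace X" for x
    using that assms(3) by (cases "x \<in> A") auto
qed (use assms in auto)

context circle_chord
begin

lemma half_disc_side:
  assumes "(n, k) \<in> {(normal, level), (- normal, - level)}"
  shows "\<bar>k\<bar> < norm n" "frontier (half_disc n k) = (sphere 0 1 \<inter> {x. k \<le> n \<bullet> x}) \<union> chord"
proof -
  have "n \<noteq> 0" "cball 0 1 \<inter> {x. n \<bullet> x = k} = chord"
    using assms normal_nonzero by (auto simp: chord_def)
  then show "frontier (half_disc n k) = (sphere 0 1 \<inter> {x. k \<le> n \<bullet> x}) \<union> chord"
    by (simp add: frontier_half_disc)
  show "\<bar>k\<bar> < norm n"
    using assms abs_level_less by auto
qed

end

locale theta_graph = circle_chord +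
  fixes X :: "'a topology" and f :: "real^2 \<Rightarrow> 'a" and \<beta> :: "real \<Rightarrow> 'a"
  assumes Hausdorff: "Hausdorff_space X"
    and f: "continuous_map circle_top X f" "inj_on f (sphere 0 1)"
    and \<beta>: "continuous_map (top_of_set {0..1}) X \<beta>" "inj_on \<beta> {0..1}"
    and ends: "f r1 = \<beta> 0" "f r2 = \<beta> 1"
    and avoid: "\<And>s. 0 < s \<Longrightarrow> s < 1 \<Longrightarrow> \<beta> s \<notin> f ` sphere 0 1"
begin

text \<open>The theta graph \<open>f ` sphere 0 1 \<union> \<beta> ` {0..1}\<close> is modelled by the unit circle together with
  the chord from \<open>r1\<close> to \<open>r2\<close>, along which \<open>\<beta>\<close> is traversed.\<close>

definition theta :: "real^2 \<Rightarrow> 'a" where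
  "theta x = (if x \<in> sphere 0 1 then f x else \<beta> (chord_param x))"

lemma theta_linepath:
  assumes "s \<in> {0..1}"
  shows "theta (linepath r1 r2 s) = \<beta> s"
  using assms ends linepath_in_sphere_iff[of s]
  by (auto simp: theta_def linepath_0' linepath_1')

lemma continuous_map_theta: "continuous_map (top_of_set (sphere 0 1 \<union> chord)) X theta"
  unfolding theta_def
proof (rule continuous_map_closedin_cases)
  show "closedin (top_of_set (sphere 0 1 \<union> chord)) (sphere 0 1)"
    by (rule closed_subset) auto
  show "closedin (top_of_set (sphere 0 1 \<union> chord)) chord"
    by (rule closed_subset) (auto simp: chord_def closed_Int closed_hyperplane)
  show "continuous_map (subtopology (top_of_set (sphere 0 1 \<union> chord)) (sphere 0 1)) X f"
    using f(1) by (simp add: subtopology_subtopology circle_top_def Int_absorb1)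
  have "continuous_on chord chord_param"
    unfolding chord_param_def using distinct by (intro continuous_intros) auto
  moreover have "chord_param ` chord \<subseteq> {0..1}"
    by (auto simp: chord_eq)
  ultimately have "continuous_map (top_of_set chord) (top_of_set {0..1}) chord_param"
    by (simp add: image_subset_iff_funcset)
  from continuous_map_compose[OF this \<beta>(1)]
  show "continuous_map (subtopology (top_of_set (sphere 0 1 \<union> chord)) chord) X
               (\<lambda>x. \<beta> (chord_param x))"
    by (simp add: subtopology_subtopology Int_absorb1 o_def)
  show "f x = \<beta> (chord_param x)" if x: "x \<in> sphere 0 1" "x \<in> chord" for x
  proof -
    obtain s where "s \<in> {0..1}" "x = linepath r1 r2 s"
      using x(2) by (auto simp: chord_eq)
    then show ?thesis
      using theta_linepath[of s] x(1) by (simp add: theta_def)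
  qed
qed auto

lemma theta_chord_notin_circle:
  assumes "y \<in> chord - sphere 0 1"
  shows "theta y \<notin> f ` sphere 0 1"
proof -
  obtain s where "s \<in> {0..1}" "y = linepath r1 r2 s"
    using assms by (auto simp: chord_eq)
  then have "0 < s" "s < 1" "theta y = \<beta> s"
    using assms linepath_in_sphere_iff[of s] theta_linepath by auto
  then show ?thesis
    using avoid by simp
qed

lemma inj_on_theta: "inj_on theta (sphere 0 1 \<union> chord)"
proof (rule inj_onI)
  fix x y assume x: "x \<in> sphere 0 1 \<union> chord" and y: "y \<in> sphere 0 1 \<union> chord"
    and eq: "theta x = theta y"
  have "theta z \<in> f ` sphere 0 1" if "z \<in> sphere 0 1" for z
    using that by (simp add: theta_def)
  then consider "x \<in> sphere 0 1" "y \<in> sphere 0 1" | "x \<in> chord" "y \<in> chord"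
    using x y eq theta_chord_notin_circle by (metis DiffI UnE)
  then show "x = y"
  proof cases
    case 1
    then show ?thesis
      using eq f(2) by (simp add: theta_def inj_on_def)
  next
    case 2
    then obtain s t where st: "s \<in> {0..1}" "x = linepath r1 r2 s" "t \<in> {0..1}" "y = linepath r1 r2 t"
      by (auto simp: chord_eq)
    then have "\<beta> s = \<beta> t"
      using eq by (simp add: theta_linepath)
    then have "s = t"
      using st(1,3) inj_onD[OF \<beta>(2)] by blast
    then show ?thesis
      using st(2,4) by simp
  qed
qed

lemma theta_image: "theta ` (sphere 0 1 \<union> chord) = f ` sphere 0 1 \<union> \<beta> ` {0..1}"
proof -
  have "theta ` sphere 0 1 = f ` sphere 0 1"
    by (rule image_cong) (simp_all add: theta_def)
  moreover have "theta ` chord = \<beta> ` {0..1}"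
    unfolding chord_eq image_image by (rule image_cong) (simp_all add: theta_linepath)
  ultimately show ?thesis
    by (simp add: image_Un)
qed

lemma beta_half_in_theta_frontier:
  assumes side: "(n, k) \<in> {(normal, level), (- normal, - level)}"
  shows "\<beta> (1/2) \<in> theta ` frontier (half_disc n k)"
proof -
  have "linepath r1 r2 (1/2) \<in> chord"
    unfolding chord_eq by (rule imageI) simp
  then have "linepath r1 r2 (1/2) \<in> frontier (half_disc n k)"
    unfolding half_disc_side(2)[OF side] by blast
  then have "theta (linepath r1 r2 (1/2)) \<in> theta ` frontier (half_disc n k)"
    by (rule imageI)
  then show ?thesis
    using theta_linepath[of "1/2"] by simp
qed

lemma infinite_theta_frontier_inter_circle:
  assumes side: "(n, k) \<in> {(normal, level), (- normal, - level)}"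
  shows "infinite (theta ` frontier (half_disc n k) \<inter> f ` sphere 0 1)"
proof -
  have "infinite (sphere (0::real^2) 1 \<inter> {x. k < n \<bullet> x})"
    by (rule infinite_sphere_inter_open_halfspace) (simp_all add: half_disc_side(1)[OF side])
  then have "infinite (f ` (sphere 0 1 \<inter> {x. k < n \<bullet> x}))"
    using inj_on_subset[OF f(2)] finite_imageD by blast
  moreover have "f ` (sphere 0 1 \<inter> {x. k < n \<bullet> x}) \<subseteq> theta ` frontier (half_disc n k) \<inter> f ` sphere 0 1"
  proof -
    have "f ` (sphere 0 1 \<inter> {x. k < n \<bullet> x}) = theta ` (sphere 0 1 \<inter> {x. k < n \<bullet> x})"
      by (rule image_cong) (simp_all add: theta_def)
    moreover have "sphere 0 1 \<inter> {x. k < n \<bullet> x} \<subseteq> frontier (half_disc n k)"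
      unfolding half_disc_side(2)[OF side] by auto
    ultimately show ?thesis
      by auto
  qed
  ultimately show ?thesis
    using infinite_super by blast
qed

lemma half_disc_embedded_circle:
  assumes side: "(n, k) \<in> {(normal, level), (- normal, - level)}"
  obtains e where "embedding_map circle_top X e"
    and "e ` sphere 0 1 \<subseteq> f ` sphere 0 1 \<union> \<beta> ` {0..1}"
    and "\<beta> (1/2) \<in> e ` sphere 0 1" and "infinite (e ` sphere 0 1 \<inter> f ` sphere 0 1)"
    and "nullhomotopic_circle X e \<Longrightarrow> \<exists>\<Psi>. continuous_map (top_of_set (half_disc n k)) X \<Psi> \<and>
           (\<forall>x\<in>frontier (half_disc n k). \<Psi> x = theta x)"
proof -
  have sub: "frontier (half_disc n k) \<subseteq> sphere 0 1 \<union> chord"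
    unfolding half_disc_side(2)[OF side] by auto
  have cont: "continuous_map (top_of_set (frontier (half_disc n k))) X theta"
    using continuous_map_from_subtopology[OF continuous_map_theta, of "frontier (half_disc n k)"] sub
    by (simp add: subtopology_subtopology Int_absorb1)
  have inj: "inj_on theta (frontier (half_disc n k))"
    using inj_on_theta sub by (rule inj_on_subset)
  obtain e where e: "embedding_map circle_top X e"
    "e ` sphere 0 1 = theta ` frontier (half_disc n k)"
    "nullhomotopic_circle X e \<Longrightarrow> \<exists>\<Psi>. continuous_map (top_of_set (half_disc n k)) X \<Psi> \<and>
       (\<forall>x\<in>frontier (half_disc n k). \<Psi> x = theta x)"
    by (rule convex_body_frontier_embedded_circle[OF Hausdorff compact_half_disc convex_half_disc
        interior_half_disc_nonempty[OF half_disc_side(1)[OF side]] cont inj]) (rule that)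
  moreover have "e ` sphere 0 1 \<subseteq> f ` sphere 0 1 \<union> \<beta> ` {0..1}"
    using e(2) sub theta_image by blast
  ultimately show ?thesis
    using that beta_half_in_theta_frontier[OF side] infinite_theta_frontier_inter_circle[OF side]
    by simp
qed

end

context theta_graph
begin

lemma half_disc_extensions_imp_nullhomotopic:
  assumes \<Psi>\<^sub>1: "continuous_map (top_of_set (half_disc normal level)) X \<Psi>\<^sub>1"
      "\<forall>x\<in>frontier (half_disc normal level). \<Psi>\<^sub>1 x = theta x"
    and \<Psi>\<^sub>2: "continuous_map (top_of_set (half_disc (- normal) (- level))) X \<Psi>\<^sub>2"
      "\<forall>x\<in>frontier (half_disc (- normal) (- level)). \<Psi>\<^sub>2 x = theta x"
  shows "nullhomotopic_circle X f"
proof -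
  have frontier1: "frontier (half_disc normal level) = (sphere 0 1 \<inter> {x. level \<le> normal \<bullet> x}) \<union> chord"
    and frontier2: "frontier (half_disc (- normal) (- level)) = (sphere 0 1 \<inter> {x. normal \<bullet> x \<le> level}) \<union> chord"
    using half_disc_side(2)[of normal level] half_disc_side(2)[of "- normal" "- level"] by simp_all
  define E where "E x = (if normal \<bullet> x \<le> level then \<Psi>\<^sub>2 x else \<Psi>\<^sub>1 x)" for x
  have "continuous_map (top_of_set (cball 0 1)) X E"
    unfolding E_def
  proof (rule continuous_map_glue_half_discs[OF \<Psi>\<^sub>1(1) \<Psi>\<^sub>2(1)])
    fix x :: "real^2" assume "x \<in> cball 0 1" "normal \<bullet> x = level"
    then have "x \<in> chord"
      by (simp add: chord_def)
    then show "\<Psi>\<^sub>1 x = \<Psi>\<^sub>2 x"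
      using \<Psi>\<^sub>1(2) \<Psi>\<^sub>2(2) unfolding frontier1 frontier2 by simp
  qed
  moreover have "\<forall>x\<in>sphere 0 1. E x = f x"
    using \<Psi>\<^sub>1(2) \<Psi>\<^sub>2(2) unfolding frontier1 frontier2 by (simp add: E_def theta_def)
  ultimately show ?thesis
    by (rule disc_extension_imp_nullhomotopic_circle)
qed

lemma essential_circle_in_theta_graph:
  assumes "\<not> nullhomotopic_circle X f"
  obtains e where "embedding_map circle_top X e"
    and "e ` sphere 0 1 \<subseteq> f ` sphere 0 1 \<union> \<beta> ` {0..1}"
    and "\<beta> (1/2) \<in> e ` sphere 0 1" and "infinite (e ` sphere 0 1 \<inter> f ` sphere 0 1)"
    and "\<not> nullhomotopic_circle X e"
proof -
  obtain e1 where e1: "embedding_map circle_top X e1"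
    "e1 ` sphere 0 1 \<subseteq> f ` sphere 0 1 \<union> \<beta> ` {0..1}"
    "\<beta> (1/2) \<in> e1 ` sphere 0 1" "infinite (e1 ` sphere 0 1 \<inter> f ` sphere 0 1)"
    and ext1: "nullhomotopic_circle X e1 \<Longrightarrow> \<exists>\<Psi>. continuous_map (top_of_set (half_disc normal level)) X \<Psi> \<and>
       (\<forall>x\<in>frontier (half_disc normal level). \<Psi> x = theta x)"
    by (rule half_disc_embedded_circle[of normal level]) (simp, rule that)
  obtain e2 where e2: "embedding_map circle_top X e2"
    "e2 ` sphere 0 1 \<subseteq> f ` sphere 0 1 \<union> \<beta> ` {0..1}"
    "\<beta> (1/2) \<in> e2 ` sphere 0 1" "infinite (e2 ` sphere 0 1 \<inter> f ` sphere 0 1)"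
    and ext2: "nullhomotopic_circle X e2 \<Longrightarrow>
      \<exists>\<Psi>. continuous_map (top_of_set (half_disc (- normal) (- level))) X \<Psi> \<and>
       (\<forall>x\<in>frontier (half_disc (- normal) (- level)). \<Psi> x = theta x)"
    by (rule half_disc_embedded_circle[of "- normal" "- level"]) (simp, rule that)
  have "\<not> (nullhomotopic_circle X e1 \<and> nullhomotopic_circle X e2)"
    using ext1 ext2 half_disc_extensions_imp_nullhomotopic assms by blast
  then show ?thesis
    using that e1 e2 by blast
qed

end

section \<open>Arcs on the circle\<close>

definition circle_point :: "real \<Rightarrow> real^2" where
  "circle_point t = cos t *\<^sub>R axis 1 1 + sin t *\<^sub>R axis 2 1"

lemma circle_point_nth [simp]: "circle_point t $ 1 = cos t" "circle_point t $ 2 = sin t"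
  by (simp_all add: circle_point_def axis_def)

lemma norm_circle_point [simp]: "norm (circle_point t) = 1"
proof -
  have "(norm (circle_point t))\<^sup>2 = 1"
    unfolding power2_norm_eq_inner by (simp add: inner_vec_def sum_2 power2_eq_square[symmetric])
  then show ?thesis
    using norm_ge_zero[of "circle_point t"] by (auto simp: power2_eq_1_iff)
qed

lemma circle_point_eq_iff: "circle_point x = circle_point y \<longleftrightarrow> (\<exists>n::int. x = y + 2 * pi * n)"
proof -
  have "circle_point x = circle_point y \<longleftrightarrow> sin x = sin y \<and> cos x = cos y"
    by (auto simp: vec_eq_iff forall_2)
  then show ?thesis by (simp add: sin_cos_eq_iff)
qed

lemma circle_point_periodic: "circle_point (t + 2 * pi) = circle_point t"
  by (simp add: circle_point_def)

lemma circle_point_eq_imp_eq: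
  assumes "circle_point x = circle_point y" "\<bar>x - y\<bar> < 2 * pi"
  shows "x = y"
proof -
  obtain n :: int where n: "x = y + 2 * pi * n"
    using assms(1) circle_point_eq_iff by blast
  then have "\<bar>real_of_int n\<bar> < 1"
    using assms(2) by (simp add: abs_mult)
  then show ?thesis
    using n by simp
qed

lemma sphere_circle_pointE:
  assumes "x \<in> sphere (0::real^2) 1"
  obtains t where "0 \<le> t" "t < 2 * pi" "x = circle_point t"
proof -
  have "x \<bullet> x = 1"
    using assms by (simp add: dot_square_norm)
  then have "(x$1)\<^sup>2 + (x$2)\<^sup>2 = 1"
    by (simp add: inner_vec_def sum_2 power2_eq_square)
  then obtain t where "0 \<le> t" "t < 2 * pi" "x$1 = cos t" "x$2 = sin t"
    by (rule sincos_total_2pi)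
  then show ?thesis
    using that by (auto simp: vec_eq_iff forall_2)
qed

lemma first_angle_to_next_point:
  assumes G: "finite G" "G \<subseteq> sphere 0 1" "circle_point t \<in> G" "G \<noteq> {circle_point t}"
    and t: "0 \<le> t" "t < 2 * pi"
  obtains a where "0 < a" "a < 2 * pi" "circle_point (t + a) \<in> G"
    "\<And>b. 0 < b \<Longrightarrow> b < a \<Longrightarrow> circle_point (t + b) \<notin> G"
proof -
  define A where "A = {a. 0 < a \<and> a < 2 * pi \<and> circle_point (t + a) \<in> G}"
  have "inj_on (\<lambda>a. circle_point (t + a)) A"
  proof (rule inj_onI)
    fix a b assume ab: "a \<in> A" "b \<in> A" and eq: "circle_point (t + a) = circle_point (t + b)"
    have "\<bar>(t + a) - (t + b)\<bar> < 2 * pi"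
      using ab by (auto simp: A_def)
    then show "a = b"
      using circle_point_eq_imp_eq[OF eq] by simp
  qed
  moreover have "(\<lambda>a. circle_point (t + a)) ` A \<subseteq> G"
    by (auto simp: A_def)
  ultimately have "finite A"
    using G(1) by (rule inj_on_finite)
  obtain q where q: "q \<in> G" "q \<noteq> circle_point t"
    using G(3,4) by blast
  then obtain t' where t': "0 \<le> t'" "t' < 2 * pi" "q = circle_point t'"
    using G(2) sphere_circle_pointE by blast
  have "A \<noteq> {}"
  proof (cases "t < t'")
    case True
    then have "t' - t \<in> A"
      using t t' q by (simp add: A_def)
    then show ?thesis by blast
  next
    case False
    have "t \<noteq> t'"
      using t' q by auto
    with False have "t' < t"
      by linarith
    then have "t' - t + 2 * pi \<in> A"
      using t t' q circle_point_periodic[of t'] by (simp add: A_def algebra_simps)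
    then show ?thesis by blast
  qed
  have "Min A \<in> A"
    using \<open>finite A\<close> \<open>A \<noteq> {}\<close> by (rule Min_in)
  moreover have "circle_point (t + b) \<notin> G" if "0 < b" "b < Min A" for b
    using that Min_le[OF \<open>finite A\<close>, of b] \<open>Min A \<in> A\<close> by (auto simp: A_def)
  ultimately show ?thesis
    using that[of "Min A"] unfolding A_def by blast
qed

lemma arc_between_consecutive_points:
  assumes G: "G \<subseteq> sphere 0 1" "2 \<le> card G"
  obtains \<gamma> :: "real \<Rightarrow> real^2" where "continuous_on {0..1} \<gamma>" "\<gamma> ` {0..1} \<subseteq> sphere 0 1"
    "inj_on \<gamma> {0..1}" "\<gamma> 0 \<in> G" "\<gamma> 1 \<in> G" "\<And>s. 0 < s \<Longrightarrow> s < 1 \<Longrightarrow> \<gamma> s \<notin> G"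
proof -
  have "finite G"
    using G(2) card.infinite by fastforce
  have "G \<noteq> {}"
    using G(2) by auto
  then obtain t where t: "0 \<le> t" "t < 2 * pi" "circle_point t \<in> G"
    using G(1) sphere_circle_pointE by (metis all_not_in_conv subsetD)
  have "G \<noteq> {circle_point t}"
    using G(2) by auto
  then obtain a where a: "0 < a" "a < 2 * pi" "circle_point (t + a) \<in> G"
    and a_first: "\<And>b. 0 < b \<Longrightarrow> b < a \<Longrightarrow> circle_point (t + b) \<notin> G"
    using first_angle_to_next_point[OF \<open>finite G\<close> G(1) t(3) _ t(1,2)] by blast
  define \<gamma> where "\<gamma> s = circle_point (t + s * a)" for s
  have "continuous_on {0..1} \<gamma>"
    unfolding \<gamma>_def circle_point_def by (intro continuous_intros)
  moreover have "\<gamma> ` {0..1} \<subseteq> sphere 0 1"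
    by (auto simp: \<gamma>_def)
  moreover have "inj_on \<gamma> {0..1}"
  proof (rule inj_onI)
    fix x y :: real assume xy: "x \<in> {0..1}" "y \<in> {0..1}" and eq: "\<gamma> x = \<gamma> y"
    have "\<bar>(t + x * a) - (t + y * a)\<bar> = \<bar>x - y\<bar> * a"
      using a(1) by (simp add: abs_mult left_diff_distrib[symmetric])
    also have "\<dots> \<le> 1 * a"
      using xy a(1) by (intro mult_right_mono) auto
    also have "\<dots> < 2 * pi"
      using a(2) by simp
    finally have "t + x * a = t + y * a"
      using eq unfolding \<gamma>_def by (rule circle_point_eq_imp_eq[rotated])
    then show "x = y"
      using a(1) by simp
  qed
  moreover have "\<gamma> 0 \<in> G" "\<gamma> 1 \<in> G"
    using t(3) a(3) by (simp_all add: \<gamma>_def)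
  moreover have "\<gamma> s \<notin> G" if "0 < s" "s < 1" for s
    using a_first[of "s * a"] that a(1) by (simp add: \<gamma>_def)
  ultimately show ?thesis
    using that by blast
qed

section \<open>Two circles meeting in at least two points\<close>

lemma arc_of_embedded_circle_between_consecutive_points:
  fixes X :: "'a topology" and u v :: "'a set"
  assumes X: "Hausdorff_space X" and v: "embedded_circle X v" and two: "2 \<le> card (u \<inter> v)"
  obtains \<beta> :: "real \<Rightarrow> 'a" where "continuous_map (top_of_set {0..1}) X \<beta>" "inj_on \<beta> {0..1}" "\<beta> ` {0..1} \<subseteq> v"
    "\<beta> 0 \<in> u" "\<beta> 1 \<in> u" "\<And>s. 0 < s \<Longrightarrow> s < 1 \<Longrightarrow> \<beta> s \<notin> u"
proof -
  obtain g where g: "embedding_map circle_top X g" "g ` sphere 0 1 = v"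
    using v unfolding embedded_circle_def by blast
  have g': "continuous_map circle_top X g" "inj_on g (sphere 0 1)"
    using g(1) embedding_map_circle_iff[OF X] by auto
  define G where "G = {s \<in> sphere 0 1. g s \<in> u}"
  have "inj_on g G" "g ` G = u \<inter> v"
    using g(2) g'(2) by (auto simp: G_def inj_on_def)
  then have "2 \<le> card G"
    using two by (metis card_image)
  moreover have "G \<subseteq> sphere 0 1"
    by (auto simp: G_def)
  ultimately obtain \<gamma> :: "real \<Rightarrow> real^2" where \<gamma>: "continuous_on {0..1} \<gamma>"
    "\<gamma> ` {0..1} \<subseteq> sphere 0 1" "inj_on \<gamma> {0..1}" "\<gamma> 0 \<in> G" "\<gamma> 1 \<in> G"
    "\<And>s. 0 < s \<Longrightarrow> s < 1 \<Longrightarrow> \<gamma> s \<notin> G"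
    using arc_between_consecutive_points by blast
  show ?thesis
  proof (rule that[of "g \<circ> \<gamma>"])
    have "continuous_map (top_of_set {0..1}) circle_top \<gamma>"
      using \<gamma>(1,2) by (auto simp: circle_top_def)
    then show "continuous_map (top_of_set {0..1}) X (g \<circ> \<gamma>)"
      using g'(1) by (rule continuous_map_compose)
    show "inj_on (g \<circ> \<gamma>) {0..1}"
      using \<gamma>(2,3) g'(2) by (simp add: comp_inj_on inj_on_subset)
    show "(g \<circ> \<gamma>) ` {0..1} \<subseteq> v"
      using \<gamma>(2) g(2) by auto
    show "(g \<circ> \<gamma>) 0 \<in> u" "(g \<circ> \<gamma>) 1 \<in> u"
      using \<gamma>(4,5) by (simp_all add: G_def)
    show "(g \<circ> \<gamma>) s \<notin> u" if "0 < s" "s < 1" for s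
    proof -
      have "\<gamma> s \<in> sphere 0 1"
        using \<gamma>(2) that by (simp add: image_subset_iff)
      then show ?thesis
        using \<gamma>(6)[OF that] by (simp add: G_def)
    qed
  qed
qed

lemma essential_circle_in_union_card_ge_2:
  fixes X :: "'a topology" and u v :: "'a set"
  assumes X: "Hausdorff_space X" and u: "essential_scc X u" and v: "embedded_circle X v"
    and fin: "finite (u \<inter> v)" and two: "2 \<le> card (u \<inter> v)"
  obtains c where "essential_scc X c" "c \<subseteq> u \<union> v" "c \<noteq> u" "c \<noteq> v"
proof -
  obtain f where fu: "embedding_map circle_top X f" "f ` sphere 0 1 = u" "\<not> nullhomotopic_circle X f"
    using u unfolding essential_scc_def by blast
  have fu': "continuous_map circle_top X f" "inj_on f (sphere 0 1)"
    using fu(1) embedding_map_circle_iff[OF X] by auto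
  obtain \<beta> :: "real \<Rightarrow> 'a" where arc: "continuous_map (top_of_set {0..1}) X \<beta>" "inj_on \<beta> {0..1}" "\<beta> ` {0..1} \<subseteq> v"
    "\<beta> 0 \<in> u" "\<beta> 1 \<in> u" and \<beta>_avoids_u: "\<And>s. 0 < s \<Longrightarrow> s < 1 \<Longrightarrow> \<beta> s \<notin> u"
    using arc_of_embedded_circle_between_consecutive_points[OF X v two] by blast
  have "\<beta> 0 \<in> f ` sphere 0 1" "\<beta> 1 \<in> f ` sphere 0 1"
    using arc(4,5) fu(2) by simp_all
  then obtain r1 r2 where r: "r1 \<in> sphere 0 1" "f r1 = \<beta> 0" "r2 \<in> sphere 0 1" "f r2 = \<beta> 1"
    by (metis imageE)
  have "\<beta> 0 \<noteq> \<beta> 1"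
  proof
    assume "\<beta> 0 = \<beta> 1"
    from inj_onD[OF arc(2) this] have "(0::real) = 1"
      by simp
    then show False by simp
  qed
  then interpret theta_graph r1 r2 X f \<beta>
    using r X fu' arc(1,2) \<beta>_avoids_u fu(2) by unfold_locales auto
  obtain e where e: "embedding_map circle_top X e"
    "e ` sphere 0 1 \<subseteq> f ` sphere 0 1 \<union> \<beta> ` {0..1}" "\<beta> (1/2) \<in> e ` sphere 0 1"
    "infinite (e ` sphere 0 1 \<inter> f ` sphere 0 1)" "\<not> nullhomotopic_circle X e"
    by (rule essential_circle_in_theta_graph[OF fu(3)])
  show ?thesis
  proof (rule that)
    show "essential_scc X (e ` sphere 0 1)"
      unfolding essential_scc_def using e(1,5) by blast
    show "e ` sphere 0 1 \<subseteq> u \<union> v"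
      using e(2) fu(2) arc(3) by blast
    show "e ` sphere 0 1 \<noteq> u"
      using e(3) \<beta>_avoids_u[of "1/2"] by auto
    show "e ` sphere 0 1 \<noteq> v"
      using e(4) fu(2) fin by (auto simp: Int_commute)
  qed
qed

theorem lemma6p3:
  fixes X :: "'a topology" and u v :: "'a set"
  assumes "closed_orientable_surface X"
    and "essential_scc X u" and "essential_scc X v"
    and "u \<noteq> v" and "finite (u \<inter> v)"
  shows "card (u \<inter> v) \<le> 1 \<longleftrightarrow>
         (\<forall>c. essential_scc X c \<and> c \<subseteq> u \<union> v \<longrightarrow> c = u \<or> c = v)"
proof -
  have X: "Hausdorff_space X"
    using assms(1) by (simp add: closed_orientable_surface_def surface_2manifold_def)
  have circles: "embedded_circle X u" "embedded_circle X v"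
    using assms(2,3) by (simp_all add: essential_scc_imp_embedded_circle)
  show ?thesis
  proof
    assume "card (u \<inter> v) \<le> 1"
    then show "\<forall>c. essential_scc X c \<and> c \<subseteq> u \<union> v \<longrightarrow> c = u \<or> c = v"
      using embedded_circle_in_union_card_le_1[OF X _ circles assms(5)]
        essential_scc_imp_embedded_circle by blast
  next
    assume no_third: "\<forall>c. essential_scc X c \<and> c \<subseteq> u \<union> v \<longrightarrow> c = u \<or> c = v"
    show "card (u \<inter> v) \<le> 1"
    proof (rule ccontr)
      assume "\<not> card (u \<inter> v) \<le> 1"
      then have "2 \<le> card (u \<inter> v)"
        by simp
      then obtain c where "essential_scc X c" "c \<subseteq> u \<union> v" "c \<noteq> u" "c \<noteq> v"
        by (rule essential_circle_in_union_card_ge_2[OF X assms(2) circles(2) assms(5)])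
      with no_third show False
        by blast
    qed
  qed
qed

end
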